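(* Let $\lambda_{\max}>1$ and let $F:[0,\lambda_{\max}]\to\mathbb{R}_+$ be continuously differentiable with $F(0)=0$, such that $F(x)<F^\star$ for all $x\in[0,1)$ and $F'(1)>0$. If $F$ is concave-like, then the Dirac measure at $1$ (i.e. $\alpha(\{1\})=1$) is the unique optimal solution of the optimization problem defining $F^\star$. Otherwise, there exist $x_1^\star\in(1,\lambda_{\max}]$, $x_2^\star\in[0,1)$ and $p^\star\in(0,1)$ such that the measure $\alpha$ with $\alpha(\{x_1^\star\})=p^\star$ and $\alpha(\{x_2^\star\})=1-p^\star$ is an optimal solution of that problem.
   Context: $F^\star=\sup\{\mathbb{E}_\alpha[F(X)]:\alpha$ a probability measure on $[0,\lambda_{\max}]$, $X\sim\alpha$, $\mathbb{E}_\alpha[X]\le1\}$. $F$ is called concave-like if for all $x_1,x_2\in[0,\lambda_{\max}]\setminus\{1\}$ and $p\in(0,1)$ with $px_1+(1-p)x_2=1$, we have $F(1)>pF(x_1)+(1-p)F(x_2)$. *)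

theory Defs
  imports "HOL-Probability.Probability"
begin

definition feasible :: "real \<Rightarrow> real measure \<Rightarrow> bool" where
  "feasible lmax M \<longleftrightarrow> prob_space M \<and> sets M = sets borel \<and>
     (AE x in M. x \<in> {0..lmax}) \<and> (\<integral>x. x \<partial>M) \<le> 1"

definition Fstar :: "(real \<Rightarrow> real) \<Rightarrow> real \<Rightarrow> real" where
  "Fstar F lmax = (SUP M \<in> {M. feasible lmax M}. (\<integral>x. F x \<partial>M))"

definition optimal :: "(real \<Rightarrow> real) \<Rightarrow> real \<Rightarrow> real measure \<Rightarrow> bool" where
  "optimal F lmax M \<longleftrightarrow> feasible lmax M \<and> (\<integral>x. F x \<partial>M) = Fstar F lmax"

definition concave_like :: "(real \<Rightarrow> real) \<Rightarrow> real \<Rightarrow> bool" where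
  "concave_like F lmax \<longleftrightarrow>
     (\<forall>x1 \<in> {0..lmax} - {1}. \<forall>x2 \<in> {0..lmax} - {1}. \<forall>p \<in> {0<..<1}.
        p * x1 + (1 - p) * x2 = 1 \<longrightarrow> F 1 > p * F x1 + (1 - p) * F x2)"

end

theory Submission
  imports Defs
begin

text \<open>A two-point distribution with mean at most 1 is a point of a compact set, so the best value V
  of q F(x) + (1 - q) F(y) over such distributions is attained. Since no straddling pair x < 1 < y
  beats V, every chord slope from (1, V) to a point right of 1 is at most every chord slope from a
  point left of 1, and a line V + l (x - 1) with l \<ge> 0 separating them lies above F on [0, lmax].
  Integrating this line bounds every feasible expectation by V, so F* = V is attained by a
  two-point measure. An optimal measure lives on the contact set of F with the line; as F < V on
  [0, 1), it is either the Dirac measure at 1 or the contact set has points on both sides of 1,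
  whose straddling combination is optimal. Concave-likeness rules out the latter. When it fails and
  the Dirac measure is optimal, F(1) = F* and a pair violating concave-likeness is itself an
  optimal straddling pair.\<close>

section \<open>Convex combinations of two reals\<close>

lemma convex_comb_between:
  fixes x y c :: real
  assumes "x < c" "c < y"
  obtains q where "q \<in> {0<..<1}" "q * y + (1 - q) * x = c"
proof (rule that[of "(c - x) / (y - x)"])
  show "(c - x) / (y - x) \<in> {0<..<1}"
    using assms by (auto simp: field_simps)
  have "(c - x) / (y - x) * y + (1 - (c - x) / (y - x)) * x = x + (c - x) / (y - x) * (y - x)"
    by argo
  then show "(c - x) / (y - x) * y + (1 - (c - x) / (y - x)) * x = c"
    using assms by simp
qed

lemma convex_comb_eq_straddles:
  fixes q x y c :: real
  assumes "q \<in> {0<..<1}" "q * x + (1 - q) * y = c" "x \<noteq> c" "y \<noteq> c"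
  shows "x < c \<and> c < y \<or> y < c \<and> c < x"
proof -
  have "\<not> (x < c \<and> y < c)"
  proof
    assume "x < c \<and> y < c"
    then have "q * x + (1 - q) * y < q * c + (1 - q) * c"
      using assms(1) by (intro add_strict_mono mult_strict_left_mono) auto
    then show False
      using assms(2) by (simp add: algebra_simps)
  qed
  moreover have "\<not> (c < x \<and> c < y)"
  proof
    assume "c < x \<and> c < y"
    then have "q * c + (1 - q) * c < q * x + (1 - q) * y"
      using assms(1) by (intro add_strict_mono mult_strict_left_mono) auto
    then show False
      using assms(2) by (simp add: algebra_simps)
  qed
  ultimately show ?thesis
    using assms(3,4) by linarith
qed

lemma convex_comb_le_imp_slope_le:
  fixes x y q u v V :: real
  assumes "x < 1" "1 < y" "q * y + (1 - q) * x = 1" "q * v + (1 - q) * u \<le> V"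
  shows "(v - V) / (y - 1) \<le> (V - u) / (1 - x)"
proof -
  have q: "(y - x) * q = 1 - x" "(y - x) * (1 - q) = y - 1"
    using assms(3) by (simp_all add: algebra_simps)
  have "(1 - x) * v + (y - 1) * u = (y - x) * (q * v + (1 - q) * u)"
    unfolding q[symmetric] by (simp add: algebra_simps)
  also have "\<dots> \<le> (y - x) * V"
    using assms by (intro mult_left_mono) auto
  finally have "(v - V) * (1 - x) \<le> (V - u) * (y - 1)"
    by (simp add: algebra_simps)
  then show ?thesis
    using assms(1,2) by (simp add: divide_simps)
qed

lemma le_affine_if_chord_slopes_le:
  fixes f :: "real \<Rightarrow> real"
  assumes "f 1 \<le> V"
    and "\<forall>x\<in>{0..<1}. l \<le> (V - f x) / (1 - x)"
    and "\<forall>y\<in>{1<..b}. (f y - V) / (y - 1) \<le> l"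
  shows "\<forall>x\<in>{0..b}. f x \<le> V + l * (x - 1)"
proof
  fix x assume x: "x \<in> {0..b}"
  show "f x \<le> V + l * (x - 1)"
  proof (cases x "1 :: real" rule: linorder_cases)
    case less
    then show ?thesis
      using assms(2) x by (auto simp: le_divide_eq algebra_simps)
  next
    case equal
    then show ?thesis
      using assms(1) by simp
  next
    case greater
    then show ?thesis
      using assms(3) x by (auto simp: divide_le_eq algebra_simps)
  qed
qed

section \<open>Two-point measures\<close>

definition two_point :: "real \<Rightarrow> real \<Rightarrow> real \<Rightarrow> real measure" where
  "two_point x y q = distr (measure_pmf (bernoulli_pmf q)) borel (\<lambda>b. if b then x else y)"

lemma prob_space_two_point: "prob_space (two_point x y q)"
  unfolding two_point_def
  by (rule prob_space.prob_space_distr) (auto intro: measure_pmf.prob_space_axioms)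

lemma sets_two_point [simp]: "sets (two_point x y q) = sets borel"
  by (simp add: two_point_def)

lemma integral_two_point:
  assumes "q \<in> {0..1}" "g \<in> borel_measurable borel"
  shows "(\<integral>z. g z \<partial>two_point x y q) = q * g x + (1 - q) * g y"
  unfolding two_point_def using assms by (subst integral_distr) (auto simp: algebra_simps)

lemma measure_two_point_singleton:
  assumes "q \<in> {0..1}" "x \<noteq> y"
  shows "measure (two_point x y q) {x} = q" "measure (two_point x y q) {y} = 1 - q"
proof -
  have "(\<lambda>b. if b then x else y) -` {x} = {True}" "(\<lambda>b. if b then x else y) -` {y} = {False}"
    using assms(2) by (auto split: if_splits)
  then show "measure (two_point x y q) {x} = q" "measure (two_point x y q) {y} = 1 - q"
    unfolding two_point_def using assms(1) by (simp_all add: measure_distr measure_pmf_single)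
qed

lemma feasible_two_point:
  assumes "q \<in> {0..1}" "x \<in> {0..lmax}" "y \<in> {0..lmax}" "q * x + (1 - q) * y \<le> 1"
  shows "feasible lmax (two_point x y q)"
proof -
  have "AE z in two_point x y q. z \<in> {0..lmax}"
    unfolding two_point_def using assms(2,3)
    by (subst AE_distr_iff) (auto simp: AE_measure_pmf_iff)
  then show ?thesis
    using assms integral_two_point[of q "\<lambda>z. z"] prob_space_two_point
    by (auto simp: feasible_def)
qed

section \<open>Feasible measures\<close>

lemma feasible_borel_measurable:
  assumes "feasible lmax M" "f \<in> borel_measurable borel"
  shows "f \<in> borel_measurable M"
proof -
  have "sets M = sets borel"
    using assms(1) by (simp add: feasible_def)
  then show ?thesis
    using assms(2) measurable_cong_sets[OF \<open>sets M = sets borel\<close> refl] by blast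
qed

lemma feasible_integrable:
  fixes f :: "real \<Rightarrow> real"
  assumes "feasible lmax M" "f \<in> borel_measurable borel" "continuous_on {0..lmax} f"
  shows "integrable M f"
proof -
  interpret prob_space M
    using assms(1) by (simp add: feasible_def)
  obtain B where B: "\<forall>x\<in>{0..lmax}. \<bar>f x\<bar> \<le> B"
    using compact_imp_bounded[OF compact_continuous_image[OF assms(3) compact_Icc]]
    by (auto simp: bounded_iff)
  have "AE x in M. x \<in> {0..lmax}"
    using assms(1) by (simp add: feasible_def)
  then have "AE x in M. norm (f x) \<le> B"
    by eventually_elim (use B in auto)
  moreover have "f \<in> borel_measurable M"
    using assms(1,2) by (rule feasible_borel_measurable)
  ultimately show ?thesis
    by (rule integrable_const_bound)
qed

lemma integral_affine_feasible:
  assumes "feasible lmax M"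
  shows "(\<integral>x. c + l * (x - 1) \<partial>M) = c + l * ((\<integral>x. x \<partial>M) - 1)"
proof -
  interpret prob_space M
    using assms by (simp add: feasible_def)
  have "integrable M (\<lambda>x. x)"
    using assms by (rule feasible_integrable) (simp_all add: continuous_on_id)
  then have "(\<integral>x. (c - l) + l * x \<partial>M) = (c - l) + l * (\<integral>x. x \<partial>M)"
    by (simp add: prob_space)
  then show ?thesis
    by (simp add: algebra_simps)
qed

text \<open>Outside \<open>[0, lmax]\<close> the objective is unconstrained, so it need not be Borel measurable;
  then every integral takes the junk value 0.\<close>
lemma Fstar_nonmeasurable:
  assumes "0 \<le> lmax" "F \<notin> borel_measurable borel"
  shows "Fstar F lmax = 0"
proof -
  have "(\<integral>x. F x \<partial>M) = 0" if "feasible lmax M" for M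
    using that assms(2) measurable_cong_sets[of M borel]
    by (intro not_integrable_integral_eq) (auto simp: feasible_def)
  moreover have "feasible lmax (two_point 0 0 1)"
    using assms(1) by (intro feasible_two_point) auto
  ultimately have "(SUP M \<in> {M. feasible lmax M}. \<integral>x. F x \<partial>M) = (SUP M \<in> {M. feasible lmax M}. 0 :: real)"
    by (intro SUP_cong) auto
  also have "\<dots> = 0"
    using \<open>feasible lmax (two_point 0 0 1)\<close> by (intro cSUP_const) auto
  finally show ?thesis
    unfolding Fstar_def .
qed

lemma ex_if_AE_and_not_AE:
  assumes "AE x in M. P x" "\<not> (AE x in M. Q x)"
  shows "\<exists>x. P x \<and> \<not> Q x"
  using assms eventually_mono by blast

lemma (in prob_space) AE_eq_const_if_integral_le:
  fixes f :: "'a \<Rightarrow> real"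
  assumes "integrable M f" "AE x in M. c \<le> f x" "(\<integral>x. f x \<partial>M) \<le> c"
  shows "AE x in M. f x = c"
proof -
  have "c \<le> (\<integral>x. f x \<partial>M)"
    using integral_mono_AE[of M "\<lambda>_. c" f] assms(1,2) by (simp add: prob_space)
  then have "AE x in M. c = f x"
    using assms by (intro integral_ineq_eq_0_then_AE) (auto simp: prob_space)
  then show ?thesis
    by eventually_elim simp
qed

lemma feasible_AE_eq_1_if_AE_ge:
  assumes "feasible lmax M" "AE x in M. 1 \<le> x"
  shows "AE x in M. x = 1"
proof -
  interpret prob_space M
    using assms(1) by (simp add: feasible_def)
  have "integrable M (\<lambda>x. x)"
    using assms(1) by (rule feasible_integrable) (simp_all add: continuous_on_id)
  then show ?thesis
    using assms(2) by (rule AE_eq_const_if_integral_le) (use assms(1) in \<open>simp add: feasible_def\<close>)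
qed

lemma feasible_AE_eq_1_if_AE_le:
  assumes "feasible lmax M" "AE x in M. x \<le> 1" "(\<integral>x. x \<partial>M) = 1"
  shows "AE x in M. x = 1"
proof -
  interpret prob_space M
    using assms(1) by (simp add: feasible_def)
  have "integrable M (\<lambda>x. - x)"
    using assms(1) by (rule feasible_integrable) (simp, intro continuous_intros)
  moreover have "AE x in M. - 1 \<le> - x"
    using assms(2) by eventually_elim simp
  moreover have "(\<integral>x. - x \<partial>M) \<le> - 1"
    using assms(3) by simp
  ultimately have "AE x in M. - x = - 1"
    by (rule AE_eq_const_if_integral_le)
  then show ?thesis
    by eventually_elim simp
qed

section \<open>The optimisation problem\<close>

lemma optimal_two_point:
  assumes "q \<in> {0..1}" "x \<in> {0..lmax}" "y \<in> {0..lmax}" "q * x + (1 - q) * y \<le> 1"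
    and "F \<in> borel_measurable borel" "q * F x + (1 - q) * F y = Fstar F lmax"
  shows "optimal F lmax (two_point x y q)"
  using assms feasible_two_point integral_two_point by (simp add: optimal_def)

lemma straddle_attaining_Fstar_if_not_concave_like:
  assumes "\<not> concave_like F lmax" "F 1 = Fstar F lmax" "0 \<le> l"
    and majorant: "\<forall>x\<in>{0..lmax}. F x \<le> Fstar F lmax + l * (x - 1)"
  shows "\<exists>x y q. x \<in> {0..<1} \<and> y \<in> {1<..lmax} \<and> q \<in> {0<..<1} \<and>
    q * y + (1 - q) * x = 1 \<and> q * F y + (1 - q) * F x = Fstar F lmax"
proof -
  obtain x1 x2 q where x1: "x1 \<in> {0..lmax} - {1}" and x2: "x2 \<in> {0..lmax} - {1}"
    and q: "q \<in> {0<..<1}" and comb: "q * x1 + (1 - q) * x2 = 1"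
    and ge: "\<not> q * F x1 + (1 - q) * F x2 < F 1"
    using assms(1) unfolding concave_like_def by blast
  have "q * F x1 + (1 - q) * F x2 \<le>
      q * (Fstar F lmax + l * (x1 - 1)) + (1 - q) * (Fstar F lmax + l * (x2 - 1))"
    using majorant x1 x2 q by (intro add_mono mult_left_mono) auto
  also have "\<dots> = Fstar F lmax + l * (q * x1 + (1 - q) * x2 - 1)"
    by (simp add: algebra_simps)
  finally have value_eq: "q * F x1 + (1 - q) * F x2 = Fstar F lmax"
    using comb ge assms(2) by simp
  have "x1 \<noteq> 1" "x2 \<noteq> 1"
    using x1 x2 by auto
  from convex_comb_eq_straddles[OF q comb this] show ?thesis
  proof
    assume "x1 < 1 \<and> 1 < x2"
    then show ?thesis
      using x1 x2 q comb value_eq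
      by (intro exI[of _ x1] exI[of _ x2] exI[of _ "1 - q"]) (auto simp: algebra_simps)
  next
    assume "x2 < 1 \<and> 1 < x1"
    then show ?thesis
      using x1 x2 q comb value_eq
      by (intro exI[of _ x2] exI[of _ x1] exI[of _ q]) auto
  qed
qed

locale mean_constrained_problem =
  fixes F :: "real \<Rightarrow> real" and lmax :: real
  assumes lmax_gt_1: "1 < lmax"
    and continuous_F: "continuous_on {0..lmax} F"
    and borel_F: "F \<in> borel_measurable borel"
    and slope_bound: "\<exists>K. \<forall>y\<in>{1<..lmax}. F y - F 1 \<le> K * (y - 1)"
begin

lemma integral_le_affine_majorant:
  assumes "feasible lmax M" "\<forall>x\<in>{0..lmax}. F x \<le> V + l * (x - 1)"
  shows "(\<integral>x. F x \<partial>M) \<le> V + l * ((\<integral>x. x \<partial>M) - 1)"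
proof -
  have "integrable M F"
    using assms(1) borel_F continuous_F by (rule feasible_integrable)
  moreover have "integrable M (\<lambda>x. V + l * (x - 1))"
    using assms(1) by (rule feasible_integrable) (simp, intro continuous_intros)
  moreover have "AE x in M. x \<in> {0..lmax}"
    using assms(1) by (simp add: feasible_def)
  then have "AE x in M. F x \<le> V + l * (x - 1)"
    by eventually_elim (use assms(2) in auto)
  ultimately have "(\<integral>x. F x \<partial>M) \<le> (\<integral>x. V + l * (x - 1) \<partial>M)"
    by (rule integral_mono_AE)
  then show ?thesis
    using integral_affine_feasible[OF assms(1)] by simp
qed

lemma two_point_maximum:
  obtains a b p where "a \<in> {0..lmax}" "b \<in> {0..lmax}" "p \<in> {0..1}" "p * a + (1 - p) * b \<le> 1"
    and "\<And>x y q. x \<in> {0..lmax} \<Longrightarrow> y \<in> {0..lmax} \<Longrightarrow> q \<in> {0..1} \<Longrightarrow>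
      q * x + (1 - q) * y \<le> 1 \<Longrightarrow> q * F x + (1 - q) * F y \<le> p * F a + (1 - p) * F b"
proof -
  define T :: "(real \<times> real \<times> real) set" where
    "T = ({0..lmax} \<times> {0..lmax} \<times> {0..1}) \<inter>
      {z. snd (snd z) * fst z + (1 - snd (snd z)) * fst (snd z) \<le> 1}"
  define f where "f z = snd (snd z) * F (fst z) + (1 - snd (snd z)) * F (fst (snd z))" for z
  have "compact T"
    unfolding T_def
    by (intro compact_Int_closed compact_Times compact_Icc closed_Collect_le continuous_intros)
  moreover have "(1, 1, 1) \<in> T"
    using lmax_gt_1 by (simp add: T_def)
  moreover have "continuous_on T f"
    unfolding f_def
    by (intro continuous_intros continuous_on_compose2[OF continuous_F]) (auto simp: T_def)
  ultimately have "\<exists>z\<in>T. \<forall>w\<in>T. f w \<le> f z"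
    by (intro continuous_attains_sup) auto
  then obtain a b p where abp: "(a, b, p) \<in> T" and max: "\<forall>w\<in>T. f w \<le> f (a, b, p)"
    by force
  show thesis
  proof (rule that)
    show "q * F x + (1 - q) * F y \<le> p * F a + (1 - p) * F b"
      if "x \<in> {0..lmax}" "y \<in> {0..lmax}" "q \<in> {0..1}" "q * x + (1 - q) * y \<le> 1" for x y q
      using max[rule_format, of "(x, y, q)"] that by (simp add: T_def f_def)
  qed (use abp in \<open>auto simp: T_def\<close>)
qed

lemma supporting_line:
  assumes le_V: "\<forall>x\<in>{0..1}. F x \<le> V"
    and straddle_le_V: "\<forall>x\<in>{0..<1}. \<forall>y\<in>{1<..lmax}. \<forall>q\<in>{0<..<1}.
      q * y + (1 - q) * x = 1 \<longrightarrow> q * F y + (1 - q) * F x \<le> V"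
  obtains l where "0 \<le> l" "\<forall>x\<in>{0..lmax}. F x \<le> V + l * (x - 1)"
proof -
  \<comment> \<open>Each right chord slope in \<open>S\<close> is bounded by every left one, as straddling pairs average at most \<open>V\<close>.\<close>
  define S where "S = (\<lambda>y. (F y - V) / (y - 1)) ` {1<..lmax}"
  obtain K where K: "\<forall>y\<in>{1<..lmax}. F y - F 1 \<le> K * (y - 1)"
    using slope_bound by blast
  have "S \<noteq> {}"
    using lmax_gt_1 by (simp add: S_def)
  have "bdd_above S"
    unfolding S_def
  proof (rule bdd_aboveI2)
    fix y assume y: "y \<in> {1<..lmax}"
    then have "F y - V \<le> K * (y - 1)"
      using K[rule_format, OF y] le_V[rule_format, of 1] by simp
    then show "(F y - V) / (y - 1) \<le> K"
      using y by (simp add: divide_le_eq)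
  qed
  have Sup_le: "Sup S \<le> (V - F x) / (1 - x)" if "x \<in> {0..<1}" for x
  proof (rule cSup_least[OF \<open>S \<noteq> {}\<close>])
    fix s assume "s \<in> S"
    then obtain y where y: "y \<in> {1<..lmax}" and s: "s = (F y - V) / (y - 1)"
      by (auto simp: S_def)
    have "x < 1" "1 < y"
      using that y by auto
    then obtain q where "q \<in> {0<..<1}" "q * y + (1 - q) * x = 1"
      using convex_comb_between by blast
    then show "s \<le> (V - F x) / (1 - x)"
      unfolding s using that y straddle_le_V by (intro convex_comb_le_imp_slope_le) auto
  qed
  show thesis
  proof (rule that)
    show "\<forall>x\<in>{0..lmax}. F x \<le> V + max 0 (Sup S) * (x - 1)"
    proof (rule le_affine_if_chord_slopes_le)
      show "F 1 \<le> V"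
        using le_V by simp
      show "\<forall>x\<in>{0..<1}. max 0 (Sup S) \<le> (V - F x) / (1 - x)"
        using Sup_le le_V by simp
      show "\<forall>y\<in>{1<..lmax}. (F y - V) / (y - 1) \<le> max 0 (Sup S)"
        using cSup_upper[OF _ \<open>bdd_above S\<close>] by (simp add: S_def le_max_iff_disj)
    qed
  qed simp
qed

lemma Fstar_attained:
  obtains M l where "optimal F lmax M" "0 \<le> l" "\<forall>x\<in>{0..lmax}. F x \<le> Fstar F lmax + l * (x - 1)"
proof -
  obtain a b p where abp: "a \<in> {0..lmax}" "b \<in> {0..lmax}" "p \<in> {0..1}" "p * a + (1 - p) * b \<le> 1"
    and max: "\<And>x y q. x \<in> {0..lmax} \<Longrightarrow> y \<in> {0..lmax} \<Longrightarrow> q \<in> {0..1} \<Longrightarrow>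
      q * x + (1 - q) * y \<le> 1 \<Longrightarrow> q * F x + (1 - q) * F y \<le> p * F a + (1 - p) * F b"
    using two_point_maximum by blast
  define V where "V = p * F a + (1 - p) * F b"
  obtain l where l: "0 \<le> l" and majorant: "\<forall>x\<in>{0..lmax}. F x \<le> V + l * (x - 1)"
  proof (rule supporting_line)
    show "\<forall>x\<in>{0..1}. F x \<le> V"
    proof
      fix x :: real assume "x \<in> {0..1}"
      then show "F x \<le> V"
        using max[of x x 1] lmax_gt_1 by (simp add: V_def)
    qed
    show "\<forall>x\<in>{0..<1}. \<forall>y\<in>{1<..lmax}. \<forall>q\<in>{0<..<1}.
      q * y + (1 - q) * x = 1 \<longrightarrow> q * F y + (1 - q) * F x \<le> V"
      using max by (simp add: V_def)
  qed
  have feasible: "feasible lmax (two_point a b p)"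
    using abp by (intro feasible_two_point)
  have "Fstar F lmax = V"
    unfolding Fstar_def
  proof (rule cSup_eq_maximum)
    show "V \<in> (\<lambda>M. \<integral>x. F x \<partial>M) ` {M. feasible lmax M}"
      using feasible integral_two_point[OF abp(3) borel_F, of a b] unfolding V_def
      by (intro image_eqI[where x = "two_point a b p"]) auto
    show "I \<le> V" if I: "I \<in> (\<lambda>M. \<integral>x. F x \<partial>M) ` {M. feasible lmax M}" for I
    proof -
      obtain M where M: "feasible lmax M" "I = (\<integral>x. F x \<partial>M)"
        using I by blast
      then have "I \<le> V + l * ((\<integral>x. x \<partial>M) - 1)"
        using majorant by (simp add: integral_le_affine_majorant)
      also have "\<dots> \<le> V"
        using M(1) l by (simp add: feasible_def mult_nonneg_nonpos)
      finally show ?thesis .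
    qed
  qed
  then show thesis
    using that[of "two_point a b p" l] abp borel_F l majorant by (simp add: optimal_two_point V_def)
qed

lemma optimal_contact:
  assumes opt: "optimal F lmax M" and l: "0 \<le> l"
    and majorant: "\<forall>x\<in>{0..lmax}. F x \<le> Fstar F lmax + l * (x - 1)"
  shows "AE x in M. F x = Fstar F lmax + l * (x - 1)" and "l * ((\<integral>x. x \<partial>M) - 1) = 0"
proof -
  have feasible: "feasible lmax M" and integral_eq: "(\<integral>x. F x \<partial>M) = Fstar F lmax"
    using opt by (simp_all add: optimal_def)
  have "l * ((\<integral>x. x \<partial>M) - 1) \<le> 0"
    using feasible l by (simp add: feasible_def mult_nonneg_nonpos)
  moreover have "0 \<le> l * ((\<integral>x. x \<partial>M) - 1)"
    using integral_le_affine_majorant[OF feasible majorant] integral_eq by simp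
  ultimately show slack: "l * ((\<integral>x. x \<partial>M) - 1) = 0"
    by simp
  have "AE x in M. x \<in> {0..lmax}"
    using feasible by (simp add: feasible_def)
  then have "AE x in M. F x \<le> Fstar F lmax + l * (x - 1)"
    by eventually_elim (use majorant in auto)
  moreover have "integrable M F"
    using feasible borel_F continuous_F by (rule feasible_integrable)
  moreover have "integrable M (\<lambda>x. Fstar F lmax + l * (x - 1))"
    using feasible by (rule feasible_integrable) (simp, intro continuous_intros)
  moreover have "(\<integral>x. F x \<partial>M) = (\<integral>x. Fstar F lmax + l * (x - 1) \<partial>M)"
    using integral_eq slack integral_affine_feasible[OF feasible] by simp
  ultimately show "AE x in M. F x = Fstar F lmax + l * (x - 1)"
    by (rule integral_ineq_eq_0_then_AE)
qed

lemma optimal_concentrated_or_straddling: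
  assumes opt: "optimal F lmax M" and l: "0 \<le> l"
    and majorant: "\<forall>x\<in>{0..lmax}. F x \<le> Fstar F lmax + l * (x - 1)"
    and below: "\<forall>x\<in>{0..<1}. F x < Fstar F lmax"
  shows "(AE x in M. x = 1) \<or>
    (\<exists>x y q. x \<in> {0..<1} \<and> y \<in> {1<..lmax} \<and> q \<in> {0<..<1} \<and>
      q * y + (1 - q) * x = 1 \<and> q * F y + (1 - q) * F x = Fstar F lmax)"
proof -
  define L where "L x = Fstar F lmax + l * (x - 1)" for x
  have feasible: "feasible lmax M"
    using opt by (simp add: optimal_def)
  then have "AE x in M. x \<in> {0..lmax}"
    by (simp add: feasible_def)
  then have contact: "AE x in M. x \<in> {0..lmax} \<and> F x = L x"
    using optimal_contact(1)[OF opt l majorant] by (simp add: L_def)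
  show ?thesis
  proof (cases "AE x in M. 1 \<le> x")
    case True
    then show ?thesis
      using feasible feasible_AE_eq_1_if_AE_ge by blast
  next
    case False
    then obtain x where x: "x \<in> {0..<1}" "F x = L x"
      using ex_if_AE_and_not_AE[OF contact] by force
    then have "l * (x - 1) < 0"
      using below[rule_format, of x] by (simp add: L_def)
    then have "0 < l"
      using l by (cases "l = 0") auto
    then have mean_eq_1: "(\<integral>x. x \<partial>M) = 1"
      using optimal_contact(2)[OF opt l majorant] by simp
    show ?thesis
    proof (cases "AE x in M. x \<le> 1")
      case True
      then show ?thesis
        using feasible mean_eq_1 feasible_AE_eq_1_if_AE_le by blast
    next
      case False
      then obtain y where y: "y \<in> {1<..lmax}" "F y = L y"
        using ex_if_AE_and_not_AE[OF contact] by force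
      obtain q where q: "q \<in> {0<..<1}" "q * y + (1 - q) * x = 1"
        using convex_comb_between[of x 1 y] x(1) y(1) by auto
      have "q * F y + (1 - q) * F x = Fstar F lmax + l * (q * y + (1 - q) * x - 1)"
        unfolding x(2) y(2) L_def by (simp add: algebra_simps)
      then show ?thesis
        using x(1) y(1) q by auto
    qed
  qed
qed

lemma optimal_at_1_if_concave_like:
  assumes "concave_like F lmax" "optimal F lmax M" "0 \<le> l"
    and majorant: "\<forall>x\<in>{0..lmax}. F x \<le> Fstar F lmax + l * (x - 1)"
    and "\<forall>x\<in>{0..<1}. F x < Fstar F lmax"
  shows "measure M {1} = 1"
proof -
  have "F 1 \<le> Fstar F lmax"
    using majorant[rule_format, of 1] lmax_gt_1 by simp
  then have "AE x in M. x = 1"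
    using optimal_concentrated_or_straddling[OF assms(2-5)] assms(1)
    unfolding concave_like_def by fastforce
  moreover interpret prob_space M
    using assms(2) by (simp add: optimal_def feasible_def)
  have "{1} \<in> sets M"
    using assms(2) by (simp add: optimal_def feasible_def)
  ultimately show ?thesis
    by (simp add: prob_eq_1)
qed

lemma straddling_optimum_if_not_concave_like:
  assumes "\<not> concave_like F lmax" "optimal F lmax M" "0 \<le> l"
    and majorant: "\<forall>x\<in>{0..lmax}. F x \<le> Fstar F lmax + l * (x - 1)"
    and "\<forall>x\<in>{0..<1}. F x < Fstar F lmax"
  shows "\<exists>x1 x2 p M. x1 \<in> {1<..lmax} \<and> x2 \<in> {0..<1} \<and> p \<in> {0<..<1} \<and>
    optimal F lmax M \<and> measure M {x1} = p \<and> measure M {x2} = 1 - p"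
proof -
  have "\<exists>x y q. x \<in> {0..<1} \<and> y \<in> {1<..lmax} \<and> q \<in> {0<..<1} \<and>
    q * y + (1 - q) * x = 1 \<and> q * F y + (1 - q) * F x = Fstar F lmax"
  proof (cases "AE x in M. x = 1")
    case False
    then show ?thesis
      using optimal_concentrated_or_straddling[OF assms(2-5)] by blast
  next
    case True
    have feasible: "feasible lmax M"
      using assms(2) by (simp add: optimal_def)
    then interpret prob_space M
      by (simp add: feasible_def)
    have "Fstar F lmax = (\<integral>x. F x \<partial>M)"
      using assms(2) by (simp add: optimal_def)
    also have "\<dots> = (\<integral>x. F 1 \<partial>M)"
      using True feasible_borel_measurable[OF feasible borel_F]
      by (intro integral_cong_AE) (auto elim: eventually_mono)
    also have "\<dots> = F 1"
      by (simp add: prob_space)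
    finally show ?thesis
      using assms(1,3,4) by (intro straddle_attaining_Fstar_if_not_concave_like) auto
  qed
  then obtain x y q where "x \<in> {0..<1}" "y \<in> {1<..lmax}" "q \<in> {0<..<1}"
    "q * y + (1 - q) * x = 1" "q * F y + (1 - q) * F x = Fstar F lmax"
    by blast
  then show ?thesis
    using optimal_two_point[of q y lmax x F] measure_two_point_singleton[of q y x] borel_F
    by (intro exI[of _ y] exI[of _ x] exI[of _ q] exI[of _ "two_point y x q"]) auto
qed

end

lemma mean_constrained_problem_if_differentiable:
  assumes "1 < lmax"
    and "\<forall>x\<in>{0..lmax}. (F has_real_derivative F' x) (at x within {0..lmax})"
    and "continuous_on {0..lmax} F'"
    and "Fstar F lmax \<noteq> 0"
  shows "mean_constrained_problem F lmax"
proof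
  show "1 < lmax"
    by (fact assms(1))
  show "continuous_on {0..lmax} F"
    using assms(2) by (intro DERIV_continuous_on) auto
  obtain K where K: "\<forall>x\<in>{0..lmax}. \<bar>F' x\<bar> \<le> K"
    using compact_imp_bounded[OF compact_continuous_image[OF assms(3) compact_Icc]]
    by (auto simp: bounded_iff)
  have "F y - F 1 \<le> K * (y - 1)" if "y \<in> {1<..lmax}" for y
  proof -
    have "\<bar>F y - F 1\<bar> \<le> K * \<bar>y - 1\<bar>"
      using field_differentiable_bound[of "{0..lmax}" F F' K y 1] assms(1,2) K that by auto
    then show ?thesis
      using that by simp
  qed
  then show "\<exists>K. \<forall>y\<in>{1<..lmax}. F y - F 1 \<le> K * (y - 1)"
    by blast
  show "F \<in> borel_measurable borel"
    using Fstar_nonmeasurable[of lmax F] assms(1,4) by fastforce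
qed

theorem proposition5p2:
  fixes F F' :: "real \<Rightarrow> real" and lmax :: real
  assumes "lmax > 1"
    and "\<forall>x \<in> {0..lmax}. F x \<ge> 0"
    and "\<forall>x \<in> {0..lmax}. (F has_real_derivative F' x) (at x within {0..lmax})"
    and "continuous_on {0..lmax} F'"
    and "F 0 = 0"
    and "\<forall>x \<in> {0..<1}. F x < Fstar F lmax"
    and "F' 1 > 0"
  shows "(concave_like F lmax \<longrightarrow>
            (\<exists>M. optimal F lmax M \<and> measure M {1} = 1) \<and>
            (\<forall>M. optimal F lmax M \<longrightarrow> measure M {1} = 1)) \<and>
         (\<not> concave_like F lmax \<longrightarrow>
            (\<exists>x1 x2 p M. x1 \<in> {1<..lmax} \<and> x2 \<in> {0..<1} \<and> p \<in> {0<..<1} \<and>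
               optimal F lmax M \<and> measure M {x1} = p \<and> measure M {x2} = 1 - p))"
proof -
  have "Fstar F lmax \<noteq> 0"
    using assms(5) assms(6)[rule_format, of 0] by simp
  with assms(1,3,4) interpret mean_constrained_problem F lmax
    by (rule mean_constrained_problem_if_differentiable)
  obtain M l where opt: "optimal F lmax M" and l: "0 \<le> l"
    and majorant: "\<forall>x\<in>{0..lmax}. F x \<le> Fstar F lmax + l * (x - 1)"
    by (rule Fstar_attained)
  have optimal_at_1: "measure M' {1} = 1" if "concave_like F lmax" "optimal F lmax M'" for M'
    using that l majorant assms(6) by (rule optimal_at_1_if_concave_like)
  show ?thesis
  proof (intro conjI impI allI)
    show "\<exists>M. optimal F lmax M \<and> measure M {1} = 1" if "concave_like F lmax"
      using opt optimal_at_1[OF that opt] by blast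
    show "optimal F lmax M' \<Longrightarrow> measure M' {1} = 1" if "concave_like F lmax" for M'
      using that by (rule optimal_at_1)
    show "\<exists>x1 x2 p M. x1 \<in> {1<..lmax} \<and> x2 \<in> {0..<1} \<and> p \<in> {0<..<1} \<and>
        optimal F lmax M \<and> measure M {x1} = p \<and> measure M {x2} = 1 - p"
      if "\<not> concave_like F lmax"
      using that opt l majorant assms(6) by (rule straddling_optimum_if_not_concave_like)
  qed
qed

end
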